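(* Let $N,M,L$ be positive integers and $\sigma^2>0$. Let $\hat\alpha_i,\hat\alpha_j\in\mathbb C$, $\hat{\mathbf G}_i,\hat{\mathbf G}_j\in\mathbb C^{N\times M}$, $\mathbf a_i,\mathbf a_j\in\mathbb C^N$, $\boldsymbol\theta\in\mathbb C^N$ with $|\boldsymbol\theta(n)|=1$ for all $n$, and $\mathbf x\in\mathbb C^M$. Set $\boldsymbol\Theta=\mathrm{diag}(\boldsymbol\theta)$, $\mathbf X=[\mathbf x,\dots,\mathbf x]\in\mathbb C^{M\times L}$, and for $k\in\{i,j\}$ let $\bar{\mathbf y}_k=\mathrm{vec}\big(\hat\alpha_k\hat{\mathbf G}_k^T\boldsymbol\Theta\mathbf a_k\mathbf a_k^T\boldsymbol\Theta\hat{\mathbf G}_k\mathbf X\big)$ and $d=\frac{1}{\sigma^2}\|\bar{\mathbf y}_i-\bar{\mathbf y}_j\|^2$. Define $\mathbf Q=\boldsymbol\theta\boldsymbol\theta^H$ and, for $k,l\in\{i,j\}$, $$\mathbf A_{k,l}=\big(\hat{\mathbf G}_l^{*}\hat{\mathbf G}_k^{T}\big)\odot\big(\mathbf a_k\mathbf a_l^H\big)^T,\qquad \mathbf B_{k,l}=\big(\mathbf a_l^{*}\mathbf a_k^T\big)\odot\big(\hat{\mathbf G}_k\mathbf x\mathbf x^H\hat{\mathbf G}_l^H\big)^T.$$ Then $d=\varphi$, where $$\varphi=\frac{L}{\sigma^2}\Big(|\hat\alpha_i|^2\mathrm{tr}\big(\mathbf Q^H\mathbf A_{i,i}\mathbf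 Q\mathbf B_{i,i}\big)-2\Re\big\{\hat\alpha_i\hat\alpha_j^{*}\mathrm{tr}\big(\mathbf Q^H\mathbf A_{i,j}\mathbf Q\mathbf B_{i,j}\big)\big\}+|\hat\alpha_j|^2\mathrm{tr}\big(\mathbf Q^H\mathbf A_{j,j}\mathbf Q\mathbf B_{j,j}\big)\Big).$$
   Context: $\odot$ is the Hadamard (entrywise) product, $(\cdot)^*$ entrywise complex conjugate, $(\cdot)^T$ transpose, $(\cdot)^H$ conjugate transpose, $\mathrm{vec}$ column-stacking vectorization, $\|\cdot\|$ the Euclidean norm. In the paper $d$ is the (symmetrized relative-entropy) distance between the Gaussian observation models under two target-location hypotheses $i$ and $j$. *)

theory Defs
  imports "HOL-Analysis.Analysis"
begin

text \<open>Matrices are Cartesian-product types: an R x C complex matrix is complex^'c^'r.\<close>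

definition hadamard :: "complex^'c^'r \<Rightarrow> complex^'c^'r \<Rightarrow> complex^'c^'r" where
  "hadamard A B = (\<chi> i j. A$i$j * B$i$j)"

definition mconj :: "complex^'c^'r \<Rightarrow> complex^'c^'r" where
  "mconj A = (\<chi> i j. cnj (A$i$j))"

definition herm :: "complex^'c^'r \<Rightarrow> complex^'r^'c" where
  "herm A = transpose (mconj A)"

definition smat :: "complex \<Rightarrow> complex^'c^'r \<Rightarrow> complex^'c^'r" where
  "smat c A = (\<chi> i j. c * A$i$j)"

definition colm :: "complex^'n \<Rightarrow> complex^1^'n" where
  "colm v = (\<chi> i j. v$i)"

definition diagm :: "complex^'n \<Rightarrow> complex^'n^'n" where
  "diagm v = (\<chi> i j. if i = j then v$i else 0)"

text \<open>Column-stacking vectorization: entry (j,i) (column j, row i), ordered column-major.\<close>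
definition vecm :: "complex^'c^'r \<Rightarrow> complex^('c \<times> 'r)" where
  "vecm A = (\<chi> p. A $ snd p $ fst p)"

end

(*
  Both noiseless echoes have rank one: with u_k = G_k^T Theta a_k and s_k = u_k^T x, every column
  of the received matrix is alpha_k s_k u_k, so d = (L / sigma^2) |alpha_i s_i u_i - alpha_j s_j u_j|^2.
  On the other side Q = theta theta^H has rank one, so tr(Q^H A Q B) = (theta^H A theta)(theta^H B theta),
  and the Hadamard structure of A_{k,l} and B_{k,l} turns these quadratic forms into u_l^H u_k and
  conj(s_l) s_k.  Expanding the squared norm gives phi.
*)

theory Submission
  imports Defs
begin

definition cinner :: "complex^'n \<Rightarrow> complex^'n \<Rightarrow> complex" where
  "cinner u v = (\<Sum>i\<in>UNIV. cnj (u$i) * v$i)"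

definition dotp :: "complex^'n \<Rightarrow> complex^'n \<Rightarrow> complex" where
  "dotp u v = (\<Sum>i\<in>UNIV. u$i * v$i)"

text \<open>The effective channel \<open>G\<^sup>T \<Theta> a\<close>: multiplying by \<open>diagm th\<close> is the entrywise product with \<open>th\<close>.\<close>

definition cascaded :: "complex^'n \<Rightarrow> complex^'m^'n \<Rightarrow> complex^'n \<Rightarrow> complex^'m" where
  "cascaded th G a = (th * a) v* G"

lemma matrix_mult_colm: "M ** colm v = colm (M *v v)"
  by (simp add: matrix_matrix_mult_def matrix_vector_mult_def colm_def vec_eq_iff)

lemma diagm_mult_vec: "diagm d *v v = d * v"
  by (simp add: diagm_def matrix_vector_mult_def vec_eq_iff if_distrib[of "\<lambda>c. c * _"] cong: if_cong)

lemma vector_mult_diagm: "v v* diagm d = d * v"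
  by (simp add: diagm_def vector_matrix_mult_def vec_eq_iff if_distrib[of "\<lambda>c. _ * c"] mult.commute
      cong: if_cong)

lemma vector_mult_colm: "v v* colm a = (\<chi> i. dotp v a)"
  by (simp add: vector_matrix_mult_def colm_def dotp_def vec_eq_iff)

lemma colm_mult_transpose_colm: "colm u ** transpose (colm v) = (\<chi> i j. u$i * v$j)"
  by (simp add: matrix_matrix_mult_def colm_def transpose_def vec_eq_iff)

lemma colm_mult_transpose_mult:
  "colm u ** transpose (colm v) ** M = colm u ** transpose (colm (v v* M))"
  by (metis matrix_mul_assoc matrix_mult_colm matrix_transpose_mul transpose_matrix_vector transpose_transpose)

lemma herm_mult: "herm (A ** B) = herm B ** herm A"
  by (simp add: herm_def mconj_def transpose_def matrix_matrix_mult_def vec_eq_iff mult.commute)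

lemma herm_herm: "herm (herm A) = A"
  by (simp add: herm_def mconj_def transpose_def vec_eq_iff)

lemma herm_colm_mult_herm_colm: "herm (colm a ** herm (colm b)) = colm b ** herm (colm a)"
  by (simp add: herm_mult herm_herm)

lemma herm_colm_mult_colm: "herm (colm u) ** colm v = (\<chi> i j. cinner u v)"
  by (simp add: herm_def mconj_def colm_def transpose_def matrix_matrix_mult_def cinner_def vec_eq_iff)

lemma cinner_mconj_mult_vec: "cinner v (mconj G *v w) = cinner (v v* G) w"
  unfolding cinner_def mconj_def matrix_vector_mult_def vector_matrix_mult_def
  by (simp add: sum_distrib_left sum_distrib_right mult_ac) (rule sum.swap)

lemma dotp_vector_matrix_mult: "dotp (v v* G) x = dotp v (G *v x)"
  unfolding dotp_def matrix_vector_mult_def vector_matrix_mult_def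
  by (simp add: sum_distrib_left sum_distrib_right mult_ac) (rule sum.swap)

lemma of_real_norm_square_eq_cinner: "complex_of_real ((norm v)\<^sup>2) = cinner v v"
  unfolding norm_vec_def L2_set_def cinner_def
  by (simp add: sum_nonneg of_real_sum complex_norm_square mult.commute del: of_real_power)

lemma cinner_self_scaled_diff:
  "cinner (p *s u - q *s v) (p *s u - q *s v)
     = p * cnj p * cinner u u - (p * cnj q * cinner v u + cnj p * q * cinner u v) + q * cnj q * cinner v v"
  by (simp add: cinner_def sum_distrib_left algebra_simps sum.distrib sum_subtractf)

lemma norm_scaled_diff_square:
  "complex_of_real ((norm (p *s u - q *s v))\<^sup>2)
     = complex_of_real ((cmod p)\<^sup>2) * cinner u u - complex_of_real (2 * Re (p * cnj q * cinner v u))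
       + complex_of_real ((cmod q)\<^sup>2) * cinner v v"
proof -
  have "cnj (cinner v u) = cinner u v"
    by (simp add: cinner_def mult.commute)
  then have cross_term:
    "complex_of_real (2 * Re (p * cnj q * cinner v u)) = p * cnj q * cinner v u + cnj p * q * cinner u v"
    using complex_add_cnj[of "p * cnj q * cinner v u"] by simp
  show ?thesis
    unfolding of_real_norm_square_eq_cinner complex_norm_square cinner_self_scaled_diff cross_term ..
qed

lemma echo_matrix_rank_one:
  fixes G :: "complex^'m^'n"
  shows "transpose G ** diagm th ** colm a ** transpose (colm a) ** diagm th ** G ** (\<chi> r c. x$r :: complex^'l^'m)
     = (\<chi> r c. dotp (cascaded th G a) x * cascaded th G a $ r)"
proof -
  have "transpose G ** diagm th ** colm a = colm (cascaded th G a)"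
    by (simp add: matrix_mult_colm cascaded_def diagm_mult_vec flip: matrix_vector_mul_assoc)
  then have "transpose G ** diagm th ** colm a ** transpose (colm a) ** diagm th ** G ** (\<chi> r c. x$r :: complex^'l^'m)
      = colm (cascaded th G a) ** transpose (colm (cascaded th G a v* (\<chi> r c. x$r :: complex^'l^'m)))"
    by (simp add: colm_mult_transpose_mult vector_mult_diagm flip: cascaded_def)
  then show ?thesis
    by (simp add: colm_mult_transpose_colm vector_matrix_mult_def dotp_def mult.commute)
qed

lemma const_columns_diff: "((\<chi> r c. v$r) :: complex^'c^'r) - (\<chi> r c. w$r) = (\<chi> r c. (v - w)$r)"
  by (simp add: vec_eq_iff)

lemma vecm_diff: "vecm (A - B) = vecm A - vecm B"
  by (simp add: vecm_def vec_eq_iff)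

lemma norm_vecm_const_columns:
  "(norm (vecm ((\<chi> r c. v$r) :: complex^'l^'m)))\<^sup>2 = real CARD('l) * (norm v)\<^sup>2"
proof -
  have "(norm (vecm ((\<chi> r c. v$r) :: complex^'l^'m)))\<^sup>2 = (\<Sum>p\<in>(UNIV :: ('l \<times> 'm) set). (cmod (v $ snd p))\<^sup>2)"
    unfolding norm_vec_def L2_set_def vecm_def by (simp add: sum_nonneg)
  also have "\<dots> = (\<Sum>c\<in>(UNIV :: 'l set). \<Sum>r\<in>UNIV. (cmod (v $ r))\<^sup>2)"
    unfolding sum.cartesian_product UNIV_Times_UNIV by (simp add: case_prod_beta)
  also have "\<dots> = real CARD('l) * (norm v)\<^sup>2"
    unfolding norm_vec_def L2_set_def by (simp add: sum_nonneg)
  finally show ?thesis .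
qed

lemma trace_rank_one_sandwich:
  "trace ((colm a ** herm (colm b)) ** M ** (colm c ** herm (colm d)) ** N)
     = cinner b (M *v c) * cinner d (N *v a)"
proof -
  have "trace ((colm a ** herm (colm b)) ** M ** (colm c ** herm (colm d)) ** N)
      = trace (colm a ** (herm (colm b) ** (M ** colm c) ** (herm (colm d) ** N)))"
    by (simp only: matrix_mul_assoc)
  also have "\<dots> = trace (herm (colm b) ** (M ** colm c) ** (herm (colm d) ** N) ** colm a)"
    by (rule trace_mul_sym)
  also have "\<dots> = trace ((herm (colm b) ** (M ** colm c)) ** (herm (colm d) ** (N ** colm a)))"
    by (simp only: matrix_mul_assoc)
  also have "\<dots> = trace ((\<chi> i j. cinner b (M *v c) :: complex^1^1) ** (\<chi> i j. cinner d (N *v a)))"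
    unfolding matrix_mult_colm[of M c] matrix_mult_colm[of N a] herm_colm_mult_colm by (rule refl)
  finally show ?thesis
    by (simp add: trace_def matrix_matrix_mult_def)
qed

lemma cinner_hadamard_rank_one:
  "cinner v (hadamard M (transpose (colm a ** herm (colm b))) *v w) = cinner (v * b) (M *v (a * w))"
  by (simp add: cinner_def hadamard_def colm_def herm_def mconj_def transpose_def
      matrix_matrix_mult_def matrix_vector_mult_def sum_distrib_left mult_ac)

lemma cinner_hadamard_cascaded:
  "cinner th (hadamard (mconj Gl ** transpose Gk) (transpose (colm ak ** herm (colm al))) *v th)
     = cinner (cascaded th Gl al) (cascaded th Gk ak)"
  by (simp add: cinner_hadamard_rank_one cinner_mconj_mult_vec cascaded_def mult.commute
      flip: matrix_vector_mul_assoc)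

lemma cinner_hadamard_echo:
  "cinner th (hadamard (mconj (colm al) ** transpose (colm ak))
                (transpose (Gk ** colm x ** herm (colm x) ** herm Gl)) *v th)
     = cnj (dotp (cascaded th Gl al) x) * dotp (cascaded th Gk ak) x"
proof -
  have "herm (colm x) ** herm Gl = herm (colm (Gl *v x))"
    by (metis herm_mult matrix_mult_colm)
  then have "Gk ** colm x ** herm (colm x) ** herm Gl = colm (Gk *v x) ** herm (colm (Gl *v x))"
    by (simp add: matrix_mult_colm flip: matrix_mul_assoc)
  then have "cinner th (hadamard (mconj (colm al) ** transpose (colm ak))
                (transpose (Gk ** colm x ** herm (colm x) ** herm Gl)) *v th)
      = cinner ((th * (Gl *v x)) v* colm al) (((Gk *v x) * th) v* colm ak)"
    by (simp add: cinner_hadamard_rank_one cinner_mconj_mult_vec flip: matrix_vector_mul_assoc)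
  also have "\<dots> = cnj (dotp (th * al) (Gl *v x)) * dotp (th * ak) (Gk *v x)"
    by (simp add: vector_mult_colm cinner_def dotp_def mult_ac)
  finally show ?thesis
    by (simp add: cascaded_def dotp_vector_matrix_mult)
qed

theorem proposition3:
  fixes sigma2 :: real
    and alpha_i alpha_j :: complex
    and G_i G_j :: "complex^'m^'n"
    and a_i a_j theta :: "complex^'n"
    and x :: "complex^'m"
    and X :: "complex^'l^'m"
  assumes "sigma2 > 0"
    and "\<forall>n. cmod (theta$n) = 1"
    and "X = (\<chi> r c. x$r)"
  shows
    "let Th = diagm theta;
         y = (\<lambda>alpha G a. vecm (smat alpha
               (transpose G ** Th ** colm a ** transpose (colm a) ** Th ** G ** X)));
         d = (1 / sigma2) * (norm (y alpha_i G_i a_i - y alpha_j G_j a_j))\<^sup>2;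
         Q = colm theta ** herm (colm theta);
         A = (\<lambda>Gk Gl ak al. hadamard (mconj Gl ** transpose Gk)
                                       (transpose (colm ak ** herm (colm al))));
         B = (\<lambda>Gk Gl ak al. hadamard (mconj (colm al) ** transpose (colm ak))
                                       (transpose (Gk ** colm x ** herm (colm x) ** herm Gl)));
         phi = complex_of_real (real CARD('l) / sigma2) *
               (complex_of_real ((cmod alpha_i)\<^sup>2) * trace (herm Q ** A G_i G_i a_i a_i ** Q ** B G_i G_i a_i a_i)
                - complex_of_real (2 * Re (alpha_i * cnj alpha_j * trace (herm Q ** A G_i G_j a_i a_j ** Q ** B G_i G_j a_i a_j)))
                + complex_of_real ((cmod alpha_j)\<^sup>2) * trace (herm Q ** A G_j G_j a_j a_j ** Q ** B G_j G_j a_j a_j))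
     in complex_of_real d = phi"
proof -
  have echo: "smat alpha (transpose G ** diagm theta ** colm a ** transpose (colm a) ** diagm theta ** G ** X)
      = (\<chi> r c. ((alpha * dotp (cascaded theta G a) x) *s cascaded theta G a) $ r)" for alpha G a
    unfolding assms(3) echo_matrix_rank_one by (simp add: smat_def vec_eq_iff mult.assoc)
  have trace: "trace (herm (colm theta ** herm (colm theta)) ** A ** (colm theta ** herm (colm theta)) ** B)
      = cinner theta (A *v theta) * cinner theta (B *v theta)" for A B :: "complex^'n^'n"
    unfolding herm_colm_mult_herm_colm trace_rank_one_sandwich ..
  have weight: "complex_of_real ((cmod (a * t))\<^sup>2) * c = complex_of_real ((cmod a)\<^sup>2) * (c * (cnj t * t))"
    for a t c :: complex
    by (simp only: norm_mult power_mult_distrib of_real_mult complex_norm_square) (simp add: mult_ac)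
  have cross: "a * t * cnj (b * t') * c = a * cnj b * (c * (cnj t' * t))" for a b t t' c :: complex
    by (simp add: mult_ac)
  have scale: "complex_of_real (1 / sigma2 * (real CARD('l) * r))
      = complex_of_real (real CARD('l) / sigma2) * complex_of_real r" for r
    by simp
  show ?thesis
    unfolding Let_def echo vecm_diff[symmetric] const_columns_diff norm_vecm_const_columns scale
      norm_scaled_diff_square weight cross trace cinner_hadamard_cascaded cinner_hadamard_echo ..
qed

end
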